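(* Consider the problem $$\min_{\pi}\ \mathrm{THR}(\pi)\quad\text{subject to}\quad R(\pi)\ge\lambda .$$ (a) If $\lambda\le\mathbb{E}[Y(0)]$, then $\pi^*_\lambda(X)\equiv 0$ is an optimal ITR, and $\mathrm{THR}(\pi^*_\lambda)=0$. (b) Suppose $\mathbb{E}[\tau(X)\,\mathbb{I}(\mathrm{THR}(X)=0)]>0$. - If $\mathbb{E}[Y(0)]<\lambda\le\mathbb{E}[Y(0)]+\mathbb{E}[\tau(X)\,\mathbb{I}(\mathrm{THR}(X)=0)]$, then $\pi^*_\lambda(X)=\mathbb{I}(\mathrm{THR}(X)=0)$ is an optimal ITR, and $\mathrm{THR}(\pi^*_\lambda)=0$. - If $\mathbb{E}[Y(0)]+\mathbb{E}[\tau(X)\,\mathbb{I}(\mathrm{THR}(X)=0)]<\lambda\le\mathbb{E}[Y(0)]+\mathbb{E}[\tau(X)\,\mathbb{I}(\tau(X)>0)]$, then the optimal ITR is $\pi^*_\lambda(X)=\mathbb{I}(\beta^*\tau(X)-\mathrm{THR}(X)>0)$, where $\beta^*$ satisfies $\mathbb{E}[Y(0)]+\mathbb{E}[\tau(X)\,\mathbb{I}(\beta^*\tau(X)-\mathrm{THR}(X)>0)]=\lambda$. - If $\mathbb{E}[Y(0)]+\mathbb{E}[\tau(X)\,\mathbb{I}(\tau(X)>0)]<\lambda$, then no solution exists. (c) Suppose $\mathbb{E}[\tau(X)\,\mathbb{I}(\mathrm{THR}(X)=0)]\le 0$. - If $\mathbb{E}[Y(0)]<\lambda\le\mathbb{E}[Y(0)]+\mathbb{E}[\tau(X)\,\mathbb{I}(\tau(X)>0)]$,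 then the optimal ITR is $\pi^*_\lambda(X)=\mathbb{I}(\beta^*\tau(X)-\mathrm{THR}(X)>0)$, where $\beta^*$ satisfies $\mathbb{E}[Y(0)]+\mathbb{E}[\tau(X)\,\mathbb{I}(\beta^*\tau(X)-\mathrm{THR}(X)>0)]=\lambda$. - If $\mathbb{E}[Y(0)]+\mathbb{E}[\tau(X)\,\mathbb{I}(\tau(X)>0)]<\lambda$, then no solution exists.
   Context: Setting. Tuples $\{X,A,Y(1),Y(0)\}$ are drawn from a superpopulation, with covariates $X\in\mathcal X$ and binary potential outcomes $Y(a)\in\{0,1\}$. Notation: - $\tau(x)=\mathbb{E}\{Y(1)-Y(0)\mid X=x\}$. - $\mathrm{THR}(x)=\mathbb{P}(Y(0)=1,Y(1)=0\mid X=x)$. - An individualized treatment rule (ITR) is a map $\pi:\mathcal X\to\{0,1\}$. - $R(\pi)=\mathbb{E}[\pi(X)Y(1)+\{1-\pi(X)\}Y(0)]$. - $\mathrm{THR}(\pi)=\mathbb{E}\{\mathrm{THR}(X)\pi(X)\}$. - $\lambda$ is a given threshold. *)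

theory Defs
  imports "HOL-Probability.Probability"
begin

text \<open>M is the distribution of the covariate X on the
space of covariates. The joint law of (Y(1),Y(0)) given X is encoded by
q x a b = P(Y(1) = a, Y(0) = b | X = x) (a version of the conditional probabilities,
which always exists since the outcome space {0,1}x{0,1} is finite).\<close>

definition valid_model :: "'x measure \<Rightarrow> ('x \<Rightarrow> bool \<Rightarrow> bool \<Rightarrow> real) \<Rightarrow> bool" where
  "valid_model M q \<longleftrightarrow> prob_space M
     \<and> (\<forall>a b. (\<lambda>x. q x a b) \<in> borel_measurable M)
     \<and> (\<forall>x a b. 0 \<le> q x a b)
     \<and> (\<forall>x. q x True True + q x True False + q x False True + q x False False = 1)"

definition mu1 :: "('x \<Rightarrow> bool \<Rightarrow> bool \<Rightarrow> real) \<Rightarrow> 'x \<Rightarrow> real" where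
  "mu1 q x = q x True True + q x True False"

definition mu0 :: "('x \<Rightarrow> bool \<Rightarrow> bool \<Rightarrow> real) \<Rightarrow> 'x \<Rightarrow> real" where
  "mu0 q x = q x True True + q x False True"

definition tau :: "('x \<Rightarrow> bool \<Rightarrow> bool \<Rightarrow> real) \<Rightarrow> 'x \<Rightarrow> real" where
  "tau q x = mu1 q x - mu0 q x"

definition THRx :: "('x \<Rightarrow> bool \<Rightarrow> bool \<Rightarrow> real) \<Rightarrow> 'x \<Rightarrow> real" where
  "THRx q x = q x False True"

definition EY0 :: "'x measure \<Rightarrow> ('x \<Rightarrow> bool \<Rightarrow> bool \<Rightarrow> real) \<Rightarrow> real" where
  "EY0 M q = (\<integral>x. mu0 q x \<partial>M)"

text \<open>An ITR is a (measurable) map from covariates to {0,1}; True means treat.\<close>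
definition itr :: "'x measure \<Rightarrow> ('x \<Rightarrow> bool) \<Rightarrow> bool" where
  "itr M \<pi> \<longleftrightarrow> \<pi> \<in> M \<rightarrow>\<^sub>M count_space UNIV"

text \<open>R(pi) = E[pi(X) Y(1) + (1 - pi(X)) Y(0)], computed by conditioning on X.\<close>
definition Rval :: "'x measure \<Rightarrow> ('x \<Rightarrow> bool \<Rightarrow> bool \<Rightarrow> real) \<Rightarrow> ('x \<Rightarrow> bool) \<Rightarrow> real" where
  "Rval M q \<pi> = (\<integral>x. of_bool (\<pi> x) * mu1 q x + (1 - of_bool (\<pi> x)) * mu0 q x \<partial>M)"

definition THRpol :: "'x measure \<Rightarrow> ('x \<Rightarrow> bool \<Rightarrow> bool \<Rightarrow> real) \<Rightarrow> ('x \<Rightarrow> bool) \<Rightarrow> real" where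
  "THRpol M q \<pi> = (\<integral>x. THRx q x * of_bool (\<pi> x) \<partial>M)"

definition feasible :: "'x measure \<Rightarrow> ('x \<Rightarrow> bool \<Rightarrow> bool \<Rightarrow> real) \<Rightarrow> real \<Rightarrow> ('x \<Rightarrow> bool) \<Rightarrow> bool" where
  "feasible M q lam \<pi> \<longleftrightarrow> itr M \<pi> \<and> Rval M q \<pi> \<ge> lam"

definition optimal :: "'x measure \<Rightarrow> ('x \<Rightarrow> bool \<Rightarrow> bool \<Rightarrow> real) \<Rightarrow> real \<Rightarrow> ('x \<Rightarrow> bool) \<Rightarrow> bool" where
  "optimal M q lam \<pi> \<longleftrightarrow> feasible M q lam \<pi>
     \<and> (\<forall>\<pi>'. feasible M q lam \<pi>' \<longrightarrow> THRpol M q \<pi> \<le> THRpol M q \<pi>')"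

end

theory Submission imports Defs begin

text \<open>Conditioning on X turns R(\<pi>) into E[Y(0)] + E[\<tau>(X) \<pi>(X)], and THR(\<pi>) \<ge> 0 always,
so a feasible rule with THR(\<pi>) = 0 is optimal, while E[\<tau>(X) \<pi>(X)] \<le> E[\<tau>(X) I(\<tau>(X) > 0)]
shows that no rule is feasible beyond that bound. For the threshold rule
\<pi>_\<beta>(x) = I(\<beta> \<tau>(x) - THR(x) > 0), the value \<pi>_\<beta>(x) minimises THR(x) \<pi>(x) - \<beta> \<tau>(x) \<pi>(x)
pointwise, hence \<pi>_\<beta> minimises the Lagrangian THR(\<pi>) - \<beta> E[\<tau>(X) \<pi>(X)]. If \<pi>_\<beta> meets the
constraint with equality and \<lambda> > E[Y(0)], then \<beta> > 0, and weak duality gives optimality.\<close>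

lemma valid_model_prob_space: "valid_model M q \<Longrightarrow> prob_space M"
  by (simp add: valid_model_def)

lemma valid_model_measurable: "valid_model M q \<Longrightarrow> (\<lambda>x. q x a b) \<in> borel_measurable M"
  by (simp add: valid_model_def)

lemma valid_model_nonneg: "valid_model M q \<Longrightarrow> 0 \<le> q x a b"
  by (simp add: valid_model_def)

lemma valid_model_total:
  "valid_model M q \<Longrightarrow> q x True True + q x True False + q x False True + q x False False = 1"
  by (simp add: valid_model_def)

lemma valid_model_le_one:
  assumes "valid_model M q" shows "q x a b \<le> 1"
  using valid_model_total[OF assms, of x]
    valid_model_nonneg[OF assms, of x True True] valid_model_nonneg[OF assms, of x True False]
    valid_model_nonneg[OF assms, of x False True] valid_model_nonneg[OF assms, of x False False]
  by (induct a; induct b; linarith)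

lemma mu0_measurable [measurable]: "valid_model M q \<Longrightarrow> mu0 q \<in> borel_measurable M"
  unfolding mu0_def using valid_model_measurable[of M q] by measurable

lemma tau_measurable [measurable]: "valid_model M q \<Longrightarrow> tau q \<in> borel_measurable M"
  unfolding tau_def mu1_def mu0_def using valid_model_measurable[of M q] by measurable

lemma THRx_measurable [measurable]: "valid_model M q \<Longrightarrow> THRx q \<in> borel_measurable M"
  unfolding THRx_def using valid_model_measurable[of M q] by measurable

lemma itr_indicator_measurable: "itr M \<pi> \<Longrightarrow> (\<lambda>x. of_bool (\<pi> x) :: real) \<in> borel_measurable M"
  unfolding itr_def by measurable

lemma abs_mu0_le_one:
  assumes "valid_model M q" shows "\<bar>mu0 q x\<bar> \<le> 1"
  unfolding mu0_def abs_le_iff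
  using valid_model_total[OF assms, of x]
    valid_model_nonneg[OF assms, of x True True] valid_model_nonneg[OF assms, of x True False]
    valid_model_nonneg[OF assms, of x False True] valid_model_nonneg[OF assms, of x False False]
  by linarith

lemma abs_tau_le_one:
  assumes "valid_model M q" shows "\<bar>tau q x\<bar> \<le> 1"
  unfolding tau_def mu1_def mu0_def abs_le_iff
  using valid_model_total[OF assms, of x]
    valid_model_nonneg[OF assms, of x True True] valid_model_nonneg[OF assms, of x True False]
    valid_model_nonneg[OF assms, of x False True] valid_model_nonneg[OF assms, of x False False]
  by linarith

lemma THRx_nonneg: "valid_model M q \<Longrightarrow> 0 \<le> THRx q x"
  unfolding THRx_def by (rule valid_model_nonneg)

lemma THRx_le_one: "valid_model M q \<Longrightarrow> THRx q x \<le> 1"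
  unfolding THRx_def by (rule valid_model_le_one)

lemma integrable_bounded_valid_model:
  assumes "valid_model M q" "f \<in> borel_measurable M" "\<And>x. \<bar>f x\<bar> \<le> (C::real)"
  shows "integrable M f"
proof -
  interpret prob_space M using valid_model_prob_space[OF assms(1)] .
  show ?thesis by (rule integrable_const_bound[where B = C]) (use assms in auto)
qed

lemma integrable_tau_itr:
  assumes "valid_model M q" "itr M \<pi>"
  shows "integrable M (\<lambda>x. tau q x * of_bool (\<pi> x))"
  using assms abs_tau_le_one[OF assms(1)]
  by (intro integrable_bounded_valid_model[where C = 1])
     (auto intro: borel_measurable_times tau_measurable itr_indicator_measurable)

lemma integrable_THRx_itr:
  assumes "valid_model M q" "itr M \<pi>"
  shows "integrable M (\<lambda>x. THRx q x * of_bool (\<pi> x))"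
  using assms THRx_nonneg[OF assms(1)] THRx_le_one[OF assms(1)]
  by (intro integrable_bounded_valid_model[where C = 1])
     (auto intro: borel_measurable_times THRx_measurable itr_indicator_measurable)

lemma itr_threshold: "valid_model M q \<Longrightarrow> itr M (\<lambda>x. \<beta> * tau q x - THRx q x > 0)"
  unfolding itr_def by measurable

lemma Rval_eq_EY0_plus_gain:
  assumes "valid_model M q" "itr M \<pi>"
  shows "Rval M q \<pi> = EY0 M q + (\<integral>x. tau q x * of_bool (\<pi> x) \<partial>M)"
proof -
  have "Rval M q \<pi> = (\<integral>x. mu0 q x + tau q x * of_bool (\<pi> x) \<partial>M)"
    unfolding Rval_def by (rule Bochner_Integration.integral_cong) (auto simp: tau_def algebra_simps)
  also have "\<dots> = EY0 M q + (\<integral>x. tau q x * of_bool (\<pi> x) \<partial>M)"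
    unfolding EY0_def using assms abs_mu0_le_one[OF assms(1)]
    by (intro Bochner_Integration.integral_add integrable_tau_itr
          integrable_bounded_valid_model[where C = 1]) auto
  finally show ?thesis .
qed

lemma THRpol_nonneg: "valid_model M q \<Longrightarrow> 0 \<le> THRpol M q \<pi>"
  unfolding THRpol_def using THRx_nonneg[of M q] by (intro Bochner_Integration.integral_nonneg) auto

lemma optimal_if_feasible_THRpol_zero:
  "valid_model M q \<Longrightarrow> feasible M q lam \<pi> \<Longrightarrow> THRpol M q \<pi> = 0 \<Longrightarrow> optimal M q lam \<pi>"
  using THRpol_nonneg by (fastforce simp: optimal_def)

lemma gain_le_positive_part:
  assumes "valid_model M q" "itr M \<pi>"
  shows "(\<integral>x. tau q x * of_bool (\<pi> x) \<partial>M) \<le> (\<integral>x. tau q x * of_bool (tau q x > 0) \<partial>M)"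
  by (rule integral_mono) (use assms in \<open>auto intro!: integrable_tau_itr simp: itr_def\<close>)

lemma not_feasible_beyond_positive_part:
  assumes "valid_model M q" "EY0 M q + (\<integral>x. tau q x * of_bool (tau q x > 0) \<partial>M) < lam"
  shows "\<not> feasible M q lam \<pi>"
  using assms Rval_eq_EY0_plus_gain[OF assms(1)] gain_le_positive_part[OF assms(1)]
  by (fastforce simp: feasible_def)

lemma threshold_minimizes_pointwise:
  fixes \<beta> t h :: real
  shows "of_bool (\<beta> * t - h > 0) * (h - \<beta> * t) \<le> of_bool p * (h - \<beta> * t)"
  by (cases p) auto

lemma threshold_minimizes_lagrangian:
  fixes \<beta> :: real
  assumes "valid_model M q" "itr M \<pi>"
  defines "\<pi>\<^sub>\<beta> \<equiv> \<lambda>x. \<beta> * tau q x - THRx q x > 0"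
  shows "THRpol M q \<pi>\<^sub>\<beta> - \<beta> * (\<integral>x. tau q x * of_bool (\<pi>\<^sub>\<beta> x) \<partial>M)
           \<le> THRpol M q \<pi> - \<beta> * (\<integral>x. tau q x * of_bool (\<pi> x) \<partial>M)"
proof -
  have "itr M \<pi>\<^sub>\<beta>" unfolding \<pi>\<^sub>\<beta>_def using assms(1) by (rule itr_threshold)
  note integrable = integrable_tau_itr integrable_THRx_itr
  have "(\<integral>x. THRx q x * of_bool (\<pi>\<^sub>\<beta> x) - \<beta> * (tau q x * of_bool (\<pi>\<^sub>\<beta> x)) \<partial>M)
      \<le> (\<integral>x. THRx q x * of_bool (\<pi> x) - \<beta> * (tau q x * of_bool (\<pi> x)) \<partial>M)"
  proof (rule integral_mono)
    fix x
    show "THRx q x * of_bool (\<pi>\<^sub>\<beta> x) - \<beta> * (tau q x * of_bool (\<pi>\<^sub>\<beta> x))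
        \<le> THRx q x * of_bool (\<pi> x) - \<beta> * (tau q x * of_bool (\<pi> x))"
      using threshold_minimizes_pointwise[of \<beta> "tau q x" "THRx q x" "\<pi> x"]
      by (simp add: \<pi>\<^sub>\<beta>_def algebra_simps)
  qed (use assms(1,2) \<open>itr M \<pi>\<^sub>\<beta>\<close> in
      \<open>auto intro!: Bochner_Integration.integrable_diff integrable_mult_right integrable\<close>)
  then show ?thesis unfolding THRpol_def
    using assms \<open>itr M \<pi>\<^sub>\<beta>\<close> by (simp add: Bochner_Integration.integral_diff integrable)
qed

lemma threshold_gain_nonpos_if_weight_nonpos:
  assumes "valid_model M q" "\<beta> \<le> 0"
  shows "(\<integral>x. tau q x * of_bool (\<beta> * tau q x - THRx q x > 0) \<partial>M) \<le> 0"
proof -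
  have "tau q x * of_bool (\<beta> * tau q x - THRx q x > 0) \<le> 0" for x
  proof (cases "\<beta> * tau q x - THRx q x > 0")
    case True
    then have "\<beta> * tau q x > 0" using THRx_nonneg[OF assms(1), of x] by linarith
    then show ?thesis using assms(2) by (simp add: zero_less_mult_iff)
  qed simp
  then have "(\<integral>x. tau q x * of_bool (\<beta> * tau q x - THRx q x > 0) \<partial>M) \<le> (\<integral>x. 0 \<partial>M)"
    by (intro integral_mono integrable_tau_itr itr_threshold assms(1)) auto
  then show ?thesis by simp
qed

theorem threshold_rule_optimal:
  assumes vm: "valid_model M q" and above: "EY0 M q < lam"
    and binding: "EY0 M q + (\<integral>x. tau q x * of_bool (\<beta> * tau q x - THRx q x > 0) \<partial>M) = lam"
  shows "optimal M q lam (\<lambda>x. \<beta> * tau q x - THRx q x > 0)"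
proof -
  let ?\<pi>\<^sub>\<beta> = "\<lambda>x. \<beta> * tau q x - THRx q x > 0"
  let ?gain = "\<lambda>\<pi>. \<integral>x. tau q x * of_bool (\<pi> x) \<partial>M"
  have itr: "itr M ?\<pi>\<^sub>\<beta>" using vm by (rule itr_threshold)
  have "\<beta> > 0"
    using threshold_gain_nonpos_if_weight_nonpos[OF vm, of \<beta>] above binding by force
  have "feasible M q lam ?\<pi>\<^sub>\<beta>"
    unfolding feasible_def using itr Rval_eq_EY0_plus_gain[OF vm itr] binding by simp
  moreover have "THRpol M q ?\<pi>\<^sub>\<beta> \<le> THRpol M q \<pi>" if "feasible M q lam \<pi>" for \<pi>
  proof -
    have itr\<pi>: "itr M \<pi>" and "lam \<le> EY0 M q + ?gain \<pi>"
      using that Rval_eq_EY0_plus_gain[OF vm] by (auto simp: feasible_def)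
    then have "\<beta> * ?gain ?\<pi>\<^sub>\<beta> \<le> \<beta> * ?gain \<pi>"
      using binding \<open>\<beta> > 0\<close> by (intro mult_left_mono) auto
    then show ?thesis
      using threshold_minimizes_lagrangian[OF vm itr\<pi>, of \<beta>] by linarith
  qed
  ultimately show ?thesis by (simp add: optimal_def)
qed

theorem theoremS1:
  fixes M :: "'x measure" and q :: "'x \<Rightarrow> bool \<Rightarrow> bool \<Rightarrow> real" and lam :: real
  assumes "valid_model M q"
  defines "A \<equiv> (\<integral>x. tau q x * of_bool (THRx q x = 0) \<partial>M)"
      and "B \<equiv> (\<integral>x. tau q x * of_bool (tau q x > 0) \<partial>M)"
  shows
    \<comment> \<open>(a)\<close>
    "(lam \<le> EY0 M q \<longrightarrow> optimal M q lam (\<lambda>x. False) \<and> THRpol M q (\<lambda>x. False) = 0)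
     \<comment> \<open>(b)\<close>
     \<and> (A > 0 \<longrightarrow>
          (EY0 M q < lam \<and> lam \<le> EY0 M q + A \<longrightarrow>
             optimal M q lam (\<lambda>x. THRx q x = 0) \<and> THRpol M q (\<lambda>x. THRx q x = 0) = 0)
        \<and> (EY0 M q + A < lam \<and> lam \<le> EY0 M q + B \<longrightarrow>
             (\<forall>\<beta>. EY0 M q + (\<integral>x. tau q x * of_bool (\<beta> * tau q x - THRx q x > 0) \<partial>M) = lam \<longrightarrow>
                optimal M q lam (\<lambda>x. \<beta> * tau q x - THRx q x > 0)))
        \<and> (EY0 M q + B < lam \<longrightarrow> \<not> (\<exists>\<pi>. optimal M q lam \<pi>)))
     \<comment> \<open>(c)\<close>
     \<and> (A \<le> 0 \<longrightarrow>
          (EY0 M q < lam \<and> lam \<le> EY0 M q + B \<longrightarrow>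
             (\<forall>\<beta>. EY0 M q + (\<integral>x. tau q x * of_bool (\<beta> * tau q x - THRx q x > 0) \<partial>M) = lam \<longrightarrow>
                optimal M q lam (\<lambda>x. \<beta> * tau q x - THRx q x > 0)))
        \<and> (EY0 M q + B < lam \<longrightarrow> \<not> (\<exists>\<pi>. optimal M q lam \<pi>)))"
proof -
  note vm = assms(1)
  have itr_never: "itr M (\<lambda>x. False)" and itr_harmless: "itr M (\<lambda>x. THRx q x = 0)"
    unfolding itr_def using vm by measurable
  have never: "lam \<le> EY0 M q \<Longrightarrow> optimal M q lam (\<lambda>x. False)"
    using vm Rval_eq_EY0_plus_gain[OF vm itr_never] itr_never
    by (intro optimal_if_feasible_THRpol_zero) (auto simp: feasible_def THRpol_def)
  have harmless_THRpol: "THRpol M q (\<lambda>x. THRx q x = 0) = 0"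
    unfolding THRpol_def by (rule Bochner_Integration.integral_eq_zero_AE) auto
  have harmless: "lam \<le> EY0 M q + A \<Longrightarrow> optimal M q lam (\<lambda>x. THRx q x = 0)"
    using vm Rval_eq_EY0_plus_gain[OF vm itr_harmless] itr_harmless harmless_THRpol
    by (intro optimal_if_feasible_THRpol_zero) (auto simp: feasible_def A_def)
  have none: "EY0 M q + B < lam \<Longrightarrow> \<not> (\<exists>\<pi>. optimal M q lam \<pi>)"
    using not_feasible_beyond_positive_part[OF vm] by (auto simp: optimal_def B_def)
  show ?thesis
    using never harmless harmless_THRpol none threshold_rule_optimal[OF vm]
    by (auto simp: THRpol_def)
qed

end
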